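(* A real Banach space $\mathbb{X}$ is a Hilbert space (i.e., its norm is induced by an inner product) if and only if for every $x\in S_{\mathbb{X}}$ and every $r>0$, $(x,x)$ is a CPP with CPP constant $(r,1)$.
   Context: $\mathbb{X}$ has dimension greater than $1$. $B(x,r)=\{u:\|u-x\|<r\}$. $x\perp_B y$ means $\|x+\lambda y\|\ge\|x\|$ for all real $\lambda$; $x^\perp=\{y:x\perp_By\}$. For $x,y\in S_{\mathbb{X}}$ and $r,\mu>0$, $(x,y)$ is a CPP with CPP constant $(r,\mu)$ if for all $z\in x^\perp\cap S_{\mathbb{X}}$, all $w\in y^\perp\cap S_{\mathbb{X}}$ and all $a,b\in\mathbb{R}$, $ax+bz\in B(x,r)\cap S_{\mathbb{X}}$ implies $\|ay+b\mu w\|\le1$. *)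

theory Defs
  imports "HOL-Analysis.Analysis"
begin

definition bj_orth :: "'a::real_normed_vector \<Rightarrow> 'a \<Rightarrow> bool" where
  "bj_orth x y \<longleftrightarrow> (\<forall>l::real. norm (x + l *\<^sub>R y) \<ge> norm x)"

definition CPP :: "'a::real_normed_vector \<Rightarrow> 'a \<Rightarrow> real \<Rightarrow> real \<Rightarrow> bool" where
  "CPP x y r mu \<longleftrightarrow> norm x = 1 \<and> norm y = 1 \<and> r > 0 \<and> mu > 0 \<and>
     (\<forall>z w. \<forall>a b::real.
        bj_orth x z \<and> norm z = 1 \<and> bj_orth y w \<and> norm w = 1 \<and>
        a *\<^sub>R x + b *\<^sub>R z \<in> ball x r \<and> norm (a *\<^sub>R x + b *\<^sub>R z) = 1
        \<longrightarrow> norm (a *\<^sub>R y + b *\<^sub>R (mu *\<^sub>R w)) \<le> 1)"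

definition norm_from_inner_product :: "'a::real_normed_vector itself \<Rightarrow> bool" where
  "norm_from_inner_product _ \<longleftrightarrow> (\<exists>ip :: 'a \<Rightarrow> 'a \<Rightarrow> real.
     (\<forall>x y. ip x y = ip y x) \<and>
     (\<forall>x y z. ip (x + y) z = ip x z + ip y z) \<and>
     (\<forall>c x y. ip (c *\<^sub>R x) y = c * ip x y) \<and>
     (\<forall>x. ip x x \<ge> 0) \<and>
     (\<forall>x. norm x = sqrt (ip x x)))"

definition dim_gt_one :: "'a::real_normed_vector itself \<Rightarrow> bool" where
  "dim_gt_one _ \<longleftrightarrow> (\<exists>x y :: 'a. x \<noteq> y \<and> independent {x, y})"

end

theory Submission
  imports Defs
begin

text \<open>With a radius \<open>r > 2\<close> the ball condition in a CPP is vacuous on the unit sphere, so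
  the hypothesis makes Birkhoff-James orthogonality isosceles:
  \<open>x \<perp>\<^sub>B z\<close> implies \<open>\<parallel>x + z\<parallel> = \<parallel>x - z\<parallel>\<close>. Following James, isosceles
  BJ-orthogonality makes the norm strictly convex and BJ-orthogonality symmetric with a unique
  orthogonal direction in every plane; this yields Pythagoras' theorem for BJ-orthogonal pairs,
  hence the parallelogram law, and the polarization identity defines the inner product.
  Conversely, in an inner product space BJ-orthogonality is ordinary orthogonality, so
  \<open>\<parallel>a x + b w\<parallel> = \<parallel>a x + b z\<parallel>\<close> for all unit vectors \<open>z, w \<perp> x\<close>.\<close>

lemma bj_orth_0_left [simp]: "bj_orth 0 z"
  by (simp add: bj_orth_def)

lemma bj_orth_0_right [simp]: "bj_orth x 0"
  by (simp add: bj_orth_def)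

lemma bj_orth_scaleR:
  assumes "bj_orth x z"
  shows "bj_orth (c *\<^sub>R x) (d *\<^sub>R z)"
  unfolding bj_orth_def
proof
  fix l :: real
  show "norm (c *\<^sub>R x) \<le> norm (c *\<^sub>R x + l *\<^sub>R d *\<^sub>R z)"
  proof (cases "c = 0")
    case False
    have "c *\<^sub>R x + l *\<^sub>R d *\<^sub>R z = c *\<^sub>R (x + (l * d / c) *\<^sub>R z)"
      using False by (simp add: algebra_simps)
    moreover have "norm x \<le> norm (x + (l * d / c) *\<^sub>R z)"
      using assms by (simp add: bj_orth_def)
    ultimately show ?thesis
      by (simp add: mult_left_mono)
  qed simp
qed

lemma bj_orth_norm_ge:
  assumes "bj_orth x z"
  shows "\<bar>a\<bar> * norm x \<le> norm (a *\<^sub>R x + b *\<^sub>R z)"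
  using bj_orth_scaleR[OF assms, of a b] unfolding bj_orth_def
  by (metis norm_scaleR scaleR_one)

lemma bj_orth_exists_shift: "\<exists>l. bj_orth (d + l *\<^sub>R s) s"
proof (cases "s = 0")
  case False
  define K where "K = 2 * norm d / norm s"
  define h where "h = (\<lambda>l::real. norm (d + l *\<^sub>R s))"
  have "K \<ge> 0"
    by (simp add: K_def)
  moreover have "continuous_on {-K..K} h"
    unfolding h_def by (intro continuous_intros)
  ultimately obtain l0 where l0: "\<forall>l\<in>{-K..K}. h l0 \<le> h l"
    using continuous_attains_inf[of "{-K..K}" h] by auto
  have "h l0 \<le> h l" for l
  proof (cases "l \<in> {-K..K}")
    case False
    then have "K * norm s < \<bar>l\<bar> * norm s"
      using \<open>s \<noteq> 0\<close> by auto
    then have "2 * norm d < \<bar>l\<bar> * norm s"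
      using \<open>s \<noteq> 0\<close> by (simp add: K_def)
    moreover have "norm (l *\<^sub>R s) \<le> h l + norm d"
      unfolding h_def by (metis add_diff_cancel_left' norm_triangle_ineq4)
    ultimately have "norm d \<le> h l"
      by simp
    moreover have "h l0 \<le> h 0"
      using l0 \<open>K \<ge> 0\<close> by simp
    ultimately show ?thesis
      by (simp add: h_def)
  qed (use l0 in blast)
  then have "bj_orth (d + l0 *\<^sub>R s) s"
    unfolding bj_orth_def h_def by (metis add.assoc scaleR_add_left)
  then show ?thesis ..
qed simp

lemma bj_orth_if_norm_eq:
  assumes plus: "norm (m + d) = norm m" and minus: "norm (m - d) = norm m"
  shows "bj_orth m d"
  unfolding bj_orth_def
proof
  fix l :: real
  show "norm m \<le> norm (m + l *\<^sub>R d)"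
  proof (cases "l \<ge> 0")
    case True
    have "(1 + l) * norm m = norm ((1 + l) *\<^sub>R m)"
      using True by simp
    also have "\<dots> \<le> norm (m + l *\<^sub>R d) + norm (l *\<^sub>R (m - d))"
      by (rule order_trans[OF _ norm_triangle_ineq]) (simp add: algebra_simps)
    also have "\<dots> = norm (m + l *\<^sub>R d) + l * norm m"
      using True minus by simp
    finally show ?thesis
      by (simp add: algebra_simps)
  next
    case False
    have "(1 - l) * norm m = norm ((1 - l) *\<^sub>R m)"
      using False by simp
    also have "\<dots> \<le> norm (m + l *\<^sub>R d) + norm ((- l) *\<^sub>R (m + d))"
      by (rule order_trans[OF _ norm_triangle_ineq]) (simp add: algebra_simps)
    also have "\<dots> = norm (m + l *\<^sub>R d) - l * norm m"
      using False plus by simp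
    finally show ?thesis
      by (simp add: algebra_simps)
  qed
qed

definition polar_inner :: "'a::real_normed_vector \<Rightarrow> 'a \<Rightarrow> real" where
  "polar_inner x y = ((norm (x + y))\<^sup>2 - (norm (x - y))\<^sup>2) / 4"

lemma polar_inner_commute: "polar_inner x y = polar_inner y x"
  by (simp add: polar_inner_def add.commute norm_minus_commute)

lemma polar_inner_self: "polar_inner x x = (norm x)\<^sup>2"
  by (simp add: polar_inner_def power_mult_distrib flip: scaleR_2)

context
  assumes isosceles: "\<And>u v::'a::real_normed_vector. bj_orth u v \<Longrightarrow> norm (u + v) = norm (u - v)"
begin

lemma isosceles_scaleR:
  fixes x z :: 'a
  assumes "bj_orth x z"
  shows "norm (a *\<^sub>R x + b *\<^sub>R z) = norm (a *\<^sub>R x - b *\<^sub>R z)"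
  using isosceles[OF bj_orth_scaleR[OF assms]] .

lemma bj_orth_sym:
  fixes x z :: 'a
  assumes "bj_orth x z"
  shows "bj_orth z x"
  unfolding bj_orth_def
proof
  fix l :: real
  have "norm (z - l *\<^sub>R x) = norm (z + l *\<^sub>R x)"
    using isosceles_scaleR[OF assms, of l 1] by (simp add: norm_minus_commute add.commute)
  moreover have "norm (2 *\<^sub>R z) \<le> norm (z + l *\<^sub>R x) + norm (z - l *\<^sub>R x)"
    by (rule order_trans[OF _ norm_triangle_ineq]) (simp add: scaleR_2)
  ultimately show "norm z \<le> norm (z + l *\<^sub>R x)"
    by simp
qed

lemma norm_periodic_if_bj_orth:
  fixes m d :: 'a
  assumes "bj_orth m d" and "bj_orth (m + d) d"
  shows "norm (m + (t + 2) *\<^sub>R d) = norm (m + t *\<^sub>R d)"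
proof -
  have "norm (m + (t + 2) *\<^sub>R d) = norm ((m + d) + (t + 1) *\<^sub>R d)"
    by (simp add: algebra_simps scaleR_2)
  also have "\<dots> = norm ((m + d) - (t + 1) *\<^sub>R d)"
    using isosceles_scaleR[OF assms(2), of 1 "t + 1"] by simp
  also have "\<dots> = norm (m - t *\<^sub>R d)"
    by (simp add: algebra_simps)
  also have "\<dots> = norm (m + t *\<^sub>R d)"
    using isosceles_scaleR[OF assms(1), of 1 t] by simp
  finally show ?thesis .
qed

text \<open>Strict convexity: if the segment from \<open>b\<close> to \<open>a\<close> lies in a sphere,
  \<open>l \<mapsto> norm (m + l *\<^sub>R d)\<close> is constant on the even integers, yet grows linearly
  unless \<open>d = 0\<close>.\<close>
lemma eq_if_norm_add_eq:
  fixes a b :: 'a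
  assumes "norm a = r" and "norm b = r" and "norm (a + b) = 2 * r"
  shows "a = b"
proof -
  define m where "m = (1/2::real) *\<^sub>R (a + b)"
  define d where "d = (1/2::real) *\<^sub>R (a - b)"
  have a: "a = m + d" and b: "b = m - d"
    by (simp_all add: m_def d_def algebra_simps flip: scaleR_2)
  have "norm m = r"
    using assms(3) by (simp add: m_def)
  then have orth: "bj_orth m d"
    using assms a b by (intro bj_orth_if_norm_eq) simp_all
  then have "bj_orth (m + d) d"
    using \<open>norm m = r\<close> assms(1) a unfolding bj_orth_def
    by (metis add.assoc scaleR_add_left scaleR_one)
  then have even: "norm (m + (2 * real n) *\<^sub>R d) = r" for n
  proof (induction n)
    case (Suc n)
    then show ?case
      using norm_periodic_if_bj_orth[OF orth, of "2 * real n"] by (simp add: distrib_left add.commute)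
  qed (simp add: \<open>norm m = r\<close>)
  have bounded: "real n * norm d \<le> r" for n
    using norm_triangle_ineq4[of "m + (2 * real n) *\<^sub>R d" m] even[of n] \<open>norm m = r\<close>
    by simp
  have "d = 0"
  proof (rule ccontr)
    assume "d \<noteq> 0"
    then obtain n where "r < real n * norm d"
      using ex_less_of_nat_mult[of "norm d" r] by auto
    with bounded[of n] show False
      by simp
  qed
  then show ?thesis
    using a b by simp
qed

lemma bj_orth_unique_shift:
  fixes w p :: 'a
  assumes "w \<noteq> 0" and "bj_orth w p" and "bj_orth w (p + m *\<^sub>R w)"
  shows "m = 0"
proof -
  define q where "q = p + m *\<^sub>R w"
  have p: "norm p \<le> norm (p + l *\<^sub>R w)" and q: "norm q \<le> norm (q + l *\<^sub>R w)" for l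
    using bj_orth_sym[OF assms(2)] bj_orth_sym[OF assms(3)] unfolding bj_orth_def q_def by blast+
  have "norm p = norm q"
    using p[of m] q[of "- m"] by (simp add: q_def)
  moreover have "p + q = 2 *\<^sub>R (p + (m / 2) *\<^sub>R w)"
    by (simp add: q_def algebra_simps flip: scaleR_2)
  then have "2 * norm p \<le> norm (p + q)"
    using p[of "m / 2"] by simp
  then have "norm (p + q) = 2 * norm p"
    using norm_triangle_ineq[of p q] \<open>norm p = norm q\<close> by simp
  ultimately have "p = q"
    by (intro eq_if_norm_add_eq[of p "norm p" q]) simp_all
  then show ?thesis
    using \<open>w \<noteq> 0\<close> by (simp add: q_def)
qed

lemma zero_if_norm_eq_bj_orth:
  fixes q s :: 'a
  assumes orth: "bj_orth q s" and "\<bar>B\<bar> < A" and eq: "norm (B *\<^sub>R s + q) = norm (A *\<^sub>R s + q)"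
  shows "s = 0"
proof -
  define g where "g t = norm (t *\<^sub>R s + q)" for t
  have min: "g 0 \<le> g t" for t
    using orth unfolding bj_orth_def g_def by (simp add: add.commute)
  have convex: "g (\<theta> * A) \<le> \<theta> * g A + (1 - \<theta>) * g 0" if "0 \<le> \<theta>" "\<theta> \<le> 1" for \<theta>
  proof -
    have "(\<theta> * A) *\<^sub>R s + q = \<theta> *\<^sub>R (A *\<^sub>R s + q) + (1 - \<theta>) *\<^sub>R q"
      by (simp add: algebra_simps)
    then show ?thesis
      using norm_triangle_ineq[of "\<theta> *\<^sub>R (A *\<^sub>R s + q)" "(1 - \<theta>) *\<^sub>R q"] that
      by (simp add: g_def)
  qed
  have "g \<bar>B\<bar> = g B"
    using isosceles_scaleR[OF orth, of 1 B] by (simp add: g_def abs_if add.commute)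
  define \<theta> where "\<theta> = \<bar>B\<bar> / A"
  have "0 \<le> \<theta>" "\<theta> < 1" "\<theta> * A = \<bar>B\<bar>"
    using \<open>\<bar>B\<bar> < A\<close> by (auto simp: \<theta>_def)
  then have "g A \<le> \<theta> * g A + (1 - \<theta>) * g 0"
    using convex[of \<theta>] \<open>g \<bar>B\<bar> = g B\<close> eq by (simp add: g_def)
  then have "(1 - \<theta>) * g A \<le> (1 - \<theta>) * g 0"
    by (simp add: algebra_simps)
  then have "g A \<le> g 0"
    using \<open>\<theta> < 1\<close> by simp
  then have "g A = g 0" and "g (1/2 * A) = g 0"
    using min[of A] min[of "1/2 * A"] convex[of "1/2"] by simp_all
  moreover have "(A *\<^sub>R s + q) + q = 2 *\<^sub>R ((1/2 * A) *\<^sub>R s + q)"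
    by (simp add: algebra_simps flip: scaleR_2)
  ultimately have "A *\<^sub>R s + q = q"
    by (intro eq_if_norm_add_eq[of _ "g 0"]) (simp_all add: g_def)
  moreover have "A \<noteq> 0"
    using \<open>\<bar>B\<bar> < A\<close> abs_ge_zero[of B] by linarith
  ultimately show ?thesis
    by simp
qed

lemma bj_orth_add_diff:
  fixes u v :: 'a
  assumes "norm u = norm v"
  shows "bj_orth (u + v) (u - v)"
proof -
  define s where "s = u + v"
  obtain c where orth: "bj_orth (u - v + c *\<^sub>R s) s"
    using bj_orth_exists_shift by blast
  define q where "q = u - v + c *\<^sub>R s"
  have "norm ((1 - c) *\<^sub>R s + q) = norm (2 *\<^sub>R u)"
    by (simp add: q_def s_def algebra_simps flip: scaleR_2)
  also have "\<dots> = norm (2 *\<^sub>R v)"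
    using assms by simp
  also have "2 *\<^sub>R v = - (1 *\<^sub>R q - (1 + c) *\<^sub>R s)"
    by (simp add: q_def s_def algebra_simps flip: scaleR_2)
  also have "norm \<dots> = norm ((1 + c) *\<^sub>R s + q)"
    using isosceles_scaleR[OF orth[folded q_def], of 1 "1 + c"]
    by (simp add: add.commute norm_minus_commute)
  finally have eq: "norm ((1 - c) *\<^sub>R s + q) = norm ((1 + c) *\<^sub>R s + q)" .
  have "s = 0 \<or> c = 0"
  proof (cases c "0::real" rule: linorder_cases)
    case less
    then show ?thesis
      using zero_if_norm_eq_bj_orth[OF orth[folded q_def], of "1 + c" "1 - c"] eq by simp
  next
    case greater
    then show ?thesis
      using zero_if_norm_eq_bj_orth[OF orth[folded q_def], of "1 - c" "1 + c"] eq by simp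
  qed simp
  then show ?thesis
    using bj_orth_sym[OF orth] by (auto simp: s_def)
qed

lemma bj_orth_unit_combination:
  fixes x z :: 'a
  assumes "norm x = 1" and "bj_orth x z" and "norm (a *\<^sub>R x + b *\<^sub>R z) = 1"
  shows "bj_orth (a *\<^sub>R x + b *\<^sub>R z) ((1 - a\<^sup>2) *\<^sub>R x - (a * b) *\<^sub>R z)"
  unfolding bj_orth_def
proof
  fix l :: real
  define w where "w = a *\<^sub>R x + b *\<^sub>R z"
  txt \<open>Up to the factor 2, \<open>w + l v\<close> (for the claimed orthogonal vector \<open>v\<close>) and
    \<open>x + l b z\<close> are \<open>\<alpha> (x + w) - \<beta> (x - w)\<close> and \<open>\<alpha> (x + w) + \<beta> (x - w)\<close>,
    while \<open>x + w \<perp>\<^sub>B x - w\<close>.\<close>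
  define \<alpha> where "\<alpha> = 1 + l * (1 - a)"
  define \<beta> where "\<beta> = 1 - l * (1 + a)"
  have orth: "bj_orth (x + w) (x - w)"
    using bj_orth_add_diff assms by (simp add: w_def)
  have coeffs: "2 * (a + l * (1 - a\<^sup>2)) = \<alpha> - \<beta> + (\<alpha> + \<beta>) * a"
    "2 * (b - l * (a * b)) = (\<alpha> + \<beta>) * b"
    by (simp_all add: \<alpha>_def \<beta>_def algebra_simps power2_eq_square)
  have "2 *\<^sub>R (w + l *\<^sub>R ((1 - a\<^sup>2) *\<^sub>R x - (a * b) *\<^sub>R z))
      = (2 * (a + l * (1 - a\<^sup>2))) *\<^sub>R x + (2 * (b - l * (a * b))) *\<^sub>R z"
    by (simp add: w_def algebra_simps)
  also have "\<dots> = (\<alpha> - \<beta> + (\<alpha> + \<beta>) * a) *\<^sub>R x + ((\<alpha> + \<beta>) * b) *\<^sub>R z"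
    by (simp only: coeffs)
  also have "\<dots> = \<alpha> *\<^sub>R (x + w) - \<beta> *\<^sub>R (x - w)"
    by (simp add: w_def algebra_simps)
  finally have "2 *\<^sub>R (w + l *\<^sub>R ((1 - a\<^sup>2) *\<^sub>R x - (a * b) *\<^sub>R z))
      = \<alpha> *\<^sub>R (x + w) - \<beta> *\<^sub>R (x - w)" .
  then have "2 * norm (w + l *\<^sub>R ((1 - a\<^sup>2) *\<^sub>R x - (a * b) *\<^sub>R z))
      = norm (\<alpha> *\<^sub>R (x + w) - \<beta> *\<^sub>R (x - w))"
    by (metis norm_scaleR abs_numeral)
  also have "\<dots> = norm (\<alpha> *\<^sub>R (x + w) + \<beta> *\<^sub>R (x - w))"
    using isosceles_scaleR[OF orth] by simp
  also have "\<alpha> *\<^sub>R (x + w) + \<beta> *\<^sub>R (x - w)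
      = (\<alpha> + \<beta> + (\<alpha> - \<beta>) * a) *\<^sub>R x + ((\<alpha> - \<beta>) * b) *\<^sub>R z"
    by (simp add: w_def algebra_simps)
  also have "\<dots> = 2 *\<^sub>R (x + (l * b) *\<^sub>R z)"
    by (simp add: \<alpha>_def \<beta>_def algebra_simps)
  also have "norm \<dots> = 2 * norm (x + (l * b) *\<^sub>R z)"
    by simp
  finally show "norm w \<le> norm (w + l *\<^sub>R ((1 - a\<^sup>2) *\<^sub>R x - (a * b) *\<^sub>R z))"
    using assms \<open>bj_orth x z\<close> unfolding bj_orth_def w_def by simp
qed

lemma sum_squares_eq_1_if_norm_eq_1:
  fixes x z :: 'a
  assumes "norm x = 1" and "norm z = 1" and orth: "bj_orth x z"
    and unit: "norm (a *\<^sub>R x + b *\<^sub>R z) = 1"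
  shows "a\<^sup>2 + b\<^sup>2 = 1"
proof (cases "b = 0")
  case True
  then show ?thesis
    using unit assms(1) by (simp add: abs_square_eq_1)
next
  case False
  define w where "w = a *\<^sub>R x + b *\<^sub>R z"
  txt \<open>Swapping the roles of \<open>x\<close> and \<open>z\<close> gives a second vector BJ-orthogonal to
    \<open>w\<close>; it differs from a multiple of the first by \<open>(1 - a\<^sup>2 - b\<^sup>2) / b\<close> times \<open>w\<close>.\<close>
  define p where "p = (- a / b) *\<^sub>R ((1 - a\<^sup>2) *\<^sub>R x - (a * b) *\<^sub>R z)"
  have "bj_orth w p"
    using bj_orth_scaleR[OF bj_orth_unit_combination[OF assms(1) orth unit], of 1 "- a / b"]
    unfolding w_def p_def scaleR_one .
  moreover have "bj_orth w ((1 - b\<^sup>2) *\<^sub>R z - (b * a) *\<^sub>R x)"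
    using bj_orth_unit_combination[OF assms(2) bj_orth_sym[OF orth], of b a] unit
    by (simp add: w_def add.commute)
  moreover have "(1 - b\<^sup>2) *\<^sub>R z - (b * a) *\<^sub>R x = p + ((1 - a\<^sup>2 - b\<^sup>2) / b) *\<^sub>R w"
  proof -
    have coeffs: "(- a / b) * (1 - a\<^sup>2) + ((1 - a\<^sup>2 - b\<^sup>2) / b) * a = - (b * a)"
      "(- a / b) * - (a * b) + ((1 - a\<^sup>2 - b\<^sup>2) / b) * b = 1 - b\<^sup>2"
      using False by (simp_all add: field_simps power2_eq_square)
    have "p + ((1 - a\<^sup>2 - b\<^sup>2) / b) *\<^sub>R w
        = ((- a / b) * (1 - a\<^sup>2) + ((1 - a\<^sup>2 - b\<^sup>2) / b) * a) *\<^sub>R x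
          + ((- a / b) * - (a * b) + ((1 - a\<^sup>2 - b\<^sup>2) / b) * b) *\<^sub>R z"
      by (simp add: p_def w_def algebra_simps)
    also have "\<dots> = (1 - b\<^sup>2) *\<^sub>R z - (b * a) *\<^sub>R x"
      by (simp only: coeffs) (simp add: algebra_simps)
    finally show ?thesis ..
  qed
  moreover have "w \<noteq> 0"
    using unit by (auto simp: w_def)
  ultimately have "(1 - a\<^sup>2 - b\<^sup>2) / b = 0"
    using bj_orth_unique_shift by metis
  then show ?thesis
    using False by simp
qed

lemma pythagoras_unit:
  fixes x z :: 'a
  assumes "norm x = 1" and "norm z = 1" and orth: "bj_orth x z"
  shows "(norm (a *\<^sub>R x + b *\<^sub>R z))\<^sup>2 = a\<^sup>2 + b\<^sup>2"
proof (cases "a *\<^sub>R x + b *\<^sub>R z = 0")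
  case True
  then have "a = 0"
    using bj_orth_norm_ge[OF orth, of a b] assms(1) by simp
  then show ?thesis
    using True assms(2) by simp
next
  case False
  define t where "t = norm (a *\<^sub>R x + b *\<^sub>R z)"
  have "t > 0"
    using False by (simp add: t_def)
  moreover have "(a / t) *\<^sub>R x + (b / t) *\<^sub>R z = (1 / t) *\<^sub>R (a *\<^sub>R x + b *\<^sub>R z)"
    by (simp add: algebra_simps divide_inverse)
  ultimately have "norm ((a / t) *\<^sub>R x + (b / t) *\<^sub>R z) = 1"
    by (simp add: t_def)
  then have "(a / t)\<^sup>2 + (b / t)\<^sup>2 = 1"
    using sum_squares_eq_1_if_norm_eq_1[OF assms] by blast
  then show ?thesis
    using \<open>t > 0\<close> by (simp add: t_def field_simps power_divide)
qed

lemma pythagoras: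
  fixes x z :: 'a
  assumes "bj_orth x z"
  shows "(norm (a *\<^sub>R x + b *\<^sub>R z))\<^sup>2 = a\<^sup>2 * (norm x)\<^sup>2 + b\<^sup>2 * (norm z)\<^sup>2"
proof (cases "x = 0 \<or> z = 0")
  case False
  define x' where "x' = x /\<^sub>R norm x"
  define z' where "z' = z /\<^sub>R norm z"
  have "a *\<^sub>R x + b *\<^sub>R z = (a * norm x) *\<^sub>R x' + (b * norm z) *\<^sub>R z'"
    using False by (simp add: x'_def z'_def mult.assoc)
  moreover have "norm x' = 1" and "norm z' = 1" and "bj_orth x' z'"
    using False bj_orth_scaleR[OF assms] by (simp_all add: x'_def z'_def)
  ultimately show ?thesis
    using pythagoras_unit by (simp add: power_mult_distrib)
qed (auto simp: power_mult_distrib)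

lemma parallelogram_law:
  fixes u v :: 'a
  shows "(norm (u + v))\<^sup>2 + (norm (u - v))\<^sup>2 = 2 * (norm u)\<^sup>2 + 2 * (norm v)\<^sup>2"
proof -
  obtain c where "bj_orth (v + c *\<^sub>R u) u"
    using bj_orth_exists_shift by blast
  then have orth: "bj_orth u (v + c *\<^sub>R u)"
    by (rule bj_orth_sym)
  have "u + v = (1 - c) *\<^sub>R u + 1 *\<^sub>R (v + c *\<^sub>R u)"
    and "u - v = (1 + c) *\<^sub>R u + (- 1) *\<^sub>R (v + c *\<^sub>R u)"
    and "v = (- c) *\<^sub>R u + 1 *\<^sub>R (v + c *\<^sub>R u)"
    by (simp_all add: algebra_simps)
  then show ?thesis
    using pythagoras[OF orth, of "1 - c" 1] pythagoras[OF orth, of "1 + c" "- 1"]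
      pythagoras[OF orth, of "- c" 1]
    by (simp add: algebra_simps power2_eq_square)
qed

lemma polar_inner_scaleR_left:
  fixes x y :: 'a
  shows "polar_inner (c *\<^sub>R x) y = c * polar_inner x y"
proof -
  obtain l where "bj_orth (y + l *\<^sub>R x) x"
    using bj_orth_exists_shift by blast
  then have orth: "bj_orth x (y + l *\<^sub>R x)"
    by (rule bj_orth_sym)
  have "polar_inner (e *\<^sub>R x) y = - e * l * (norm x)\<^sup>2" for e
  proof -
    have "e *\<^sub>R x + y = (e - l) *\<^sub>R x + 1 *\<^sub>R (y + l *\<^sub>R x)"
      and "e *\<^sub>R x - y = (e + l) *\<^sub>R x + (- 1) *\<^sub>R (y + l *\<^sub>R x)"
      by (simp_all add: algebra_simps)
    then show ?thesis
      using pythagoras[OF orth, of "e - l" 1] pythagoras[OF orth, of "e + l" "- 1"]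
      by (simp add: polar_inner_def algebra_simps power2_eq_square)
  qed
  from this[of c] this[of 1] show ?thesis
    by simp
qed

lemma polar_inner_add_left:
  fixes x y z :: 'a
  shows "polar_inner (x + y) z = polar_inner x z + polar_inner y z"
proof -
  have "(norm (x + y + 2 *\<^sub>R z))\<^sup>2 = 2 * (norm (x + z))\<^sup>2 + 2 * (norm (y + z))\<^sup>2 - (norm (x - y))\<^sup>2"
    using parallelogram_law[of "x + z" "y + z"] by (simp add: algebra_simps scaleR_2)
  moreover have "(norm (x + y - 2 *\<^sub>R z))\<^sup>2 = 2 * (norm (x - z))\<^sup>2 + 2 * (norm (y - z))\<^sup>2 - (norm (x - y))\<^sup>2"
    using parallelogram_law[of "x - z" "y - z"] by (simp add: algebra_simps scaleR_2)
  ultimately have "polar_inner (x + y) (2 *\<^sub>R z) = 2 * (polar_inner x z + polar_inner y z)"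
    by (simp add: polar_inner_def field_simps)
  moreover have "polar_inner (x + y) (2 *\<^sub>R z) = 2 * polar_inner (x + y) z"
    by (metis polar_inner_commute polar_inner_scaleR_left)
  ultimately show ?thesis
    by simp
qed

lemma norm_from_inner_product_if_isosceles: "norm_from_inner_product TYPE('a)"
  unfolding norm_from_inner_product_def
  by (intro exI[of _ "polar_inner :: 'a \<Rightarrow> 'a \<Rightarrow> real"] conjI allI polar_inner_commute
      polar_inner_add_left polar_inner_scaleR_left) (simp_all add: polar_inner_self)

end


lemma norm_diff_le_norm_add_if_CPP:
  fixes x z :: "'a::real_normed_vector"
  assumes CPP: "\<And>x::'a. norm x = 1 \<Longrightarrow> CPP x x r 1" and "2 < r" and orth: "bj_orth x z"
  shows "norm (x - z) \<le> norm (x + z)"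
proof (cases "x = 0 \<or> z = 0")
  case False
  define x' where "x' = x /\<^sub>R norm x"
  define z' where "z' = z /\<^sub>R norm z"
  define t where "t = norm (x + z)"
  have "norm x' = 1" and "norm z' = 1" and "norm (- z') = 1"
    using False by (simp_all add: x'_def z'_def)
  moreover have "bj_orth x' z'"
    using bj_orth_scaleR[OF orth] by (simp add: x'_def z'_def)
  moreover have "bj_orth x' (- z')"
    using bj_orth_scaleR[OF \<open>bj_orth x' z'\<close>, of 1 "- 1"] by simp
  moreover have "norm x \<le> t"
    using bj_orth_norm_ge[OF orth, of 1 1] by (simp add: t_def)
  then have "t > 0"
    using False zero_less_norm_iff[of x] by linarith
  then have sum: "(norm x / t) *\<^sub>R x' + (norm z / t) *\<^sub>R z' = (1 / t) *\<^sub>R (x + z)"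
    and diff: "(norm x / t) *\<^sub>R x' + (norm z / t) *\<^sub>R (1 *\<^sub>R - z') = (1 / t) *\<^sub>R (x - z)"
    using False by (simp_all add: x'_def z'_def algebra_simps)
  moreover have "norm ((1 / t) *\<^sub>R (x + z)) = 1"
    using \<open>t > 0\<close> by (simp add: t_def)
  moreover have "(1 / t) *\<^sub>R (x + z) \<in> ball x' r"
    using norm_triangle_ineq4[of x' "(1 / t) *\<^sub>R (x + z)"] \<open>norm x' = 1\<close> \<open>2 < r\<close> \<open>t > 0\<close>
    by (simp add: dist_norm t_def)
  ultimately have "norm ((1 / t) *\<^sub>R (x - z)) \<le> 1"
    using CPP[OF \<open>norm x' = 1\<close>] unfolding CPP_def by (metis sum diff)
  then show ?thesis
    using \<open>t > 0\<close> by (simp add: t_def)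
qed (auto simp: norm_minus_commute)

lemma isosceles_if_CPP:
  fixes x z :: "'a::real_normed_vector"
  assumes "\<And>x::'a. norm x = 1 \<Longrightarrow> CPP x x r 1" and "2 < r" and "bj_orth x z"
  shows "norm (x + z) = norm (x - z)"
  using norm_diff_le_norm_add_if_CPP[OF assms] bj_orth_scaleR[OF assms(3), of 1 "- 1"]
    norm_diff_le_norm_add_if_CPP[OF assms(1,2), of x "- z"]
  by simp

locale norm_from_inner =
  fixes ip :: "'a::real_normed_vector \<Rightarrow> 'a \<Rightarrow> real"
  assumes ip_commute: "ip x y = ip y x"
    and ip_add_left: "ip (x + y) z = ip x z + ip y z"
    and ip_scaleR_left: "ip (c *\<^sub>R x) y = c * ip x y"
    and norm_eq_sqrt_ip: "norm x = sqrt (ip x x)"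
begin

lemma power2_norm_eq_ip: "(norm x)\<^sup>2 = ip x x"
  using norm_eq_sqrt_ip[of x] norm_ge_zero[of x] by (metis real_sqrt_ge_0_iff real_sqrt_pow2)

lemma ip_add_right: "ip x (y + z) = ip x y + ip x z"
  by (metis ip_add_left ip_commute)

lemma ip_scaleR_right: "ip x (c *\<^sub>R y) = c * ip x y"
  by (metis ip_scaleR_left ip_commute)

lemma power2_norm_linear_combination:
  "(norm (a *\<^sub>R x + b *\<^sub>R z))\<^sup>2 = a\<^sup>2 * (norm x)\<^sup>2 + 2 * a * b * ip x z + b\<^sup>2 * (norm z)\<^sup>2"
proof -
  have "(norm (a *\<^sub>R x + b *\<^sub>R z))\<^sup>2 = ip (a *\<^sub>R x + b *\<^sub>R z) (a *\<^sub>R x + b *\<^sub>R z)"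
    by (rule power2_norm_eq_ip)
  also have "\<dots> = a\<^sup>2 * ip x x + 2 * a * b * ip x z + b\<^sup>2 * ip z z"
    by (simp add: ip_add_left ip_add_right ip_scaleR_left ip_scaleR_right ip_commute[of z x]
        algebra_simps power2_eq_square)
  finally show ?thesis
    by (simp add: power2_norm_eq_ip)
qed

lemma ip_eq_0_if_bj_orth:
  assumes "bj_orth x z"
  shows "ip x z = 0"
proof -
  define c where "c = ip x z"
  define k where "k = (norm z)\<^sup>2"
  txt \<open>Close to the minimiser \<open>- c / k\<close>; the \<open>+ 1\<close> covers \<open>z = 0\<close>.\<close>
  define l where "l = - c / (k + 1)"
  have "k \<ge> 0"
    by (simp add: k_def)
  then have kl: "(k + 1) * l = - c"
    by (simp add: l_def)
  have "(norm x)\<^sup>2 \<le> (norm (x + l *\<^sub>R z))\<^sup>2"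
    using assms unfolding bj_orth_def by (simp add: power_mono)
  moreover have "(norm (x + l *\<^sub>R z))\<^sup>2 = (norm x)\<^sup>2 + 2 * l * c + l\<^sup>2 * k"
    using power2_norm_linear_combination[of 1 x l z] by (simp add: c_def k_def)
  ultimately have "0 \<le> 2 * l * c + l\<^sup>2 * k"
    by linarith
  then have "0 \<le> (k + 1)\<^sup>2 * (2 * l * c + l\<^sup>2 * k)"
    by simp
  also have "\<dots> = 2 * (k + 1) * c * ((k + 1) * l) + ((k + 1) * l)\<^sup>2 * k"
    by (simp add: algebra_simps power2_eq_square)
  also have "\<dots> = - (c\<^sup>2 * (k + 2))"
    unfolding kl by (simp add: algebra_simps power2_eq_square)
  finally have "c\<^sup>2 * (k + 2) \<le> 0"
    by simp
  then show ?thesis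
    using \<open>k \<ge> 0\<close> by (simp add: c_def mult_le_0_iff)
qed

lemma CPP_self:
  fixes x :: 'a
  assumes "norm x = 1" and "r > 0"
  shows "CPP x x r 1"
  unfolding CPP_def
proof (intro conjI allI impI)
  fix z w :: 'a and a b :: real
  assume "bj_orth x z \<and> norm z = 1 \<and> bj_orth x w \<and> norm w = 1 \<and>
    a *\<^sub>R x + b *\<^sub>R z \<in> ball x r \<and> norm (a *\<^sub>R x + b *\<^sub>R z) = 1"
  then have "(norm (a *\<^sub>R x + b *\<^sub>R w))\<^sup>2 = 1"
    using power2_norm_linear_combination[of a x b z] power2_norm_linear_combination[of a x b w]
    by (simp add: ip_eq_0_if_bj_orth)
  then show "norm (a *\<^sub>R x + b *\<^sub>R (1 *\<^sub>R w)) \<le> 1"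
    using norm_ge_zero[of "a *\<^sub>R x + b *\<^sub>R w"] by (auto simp: power2_eq_1_iff)
qed (use assms in auto)

end

theorem mainTheorem20:
  assumes "dim_gt_one TYPE('a::banach)"
  shows "norm_from_inner_product TYPE('a) \<longleftrightarrow>
         (\<forall>x::'a. \<forall>r>0. norm x = 1 \<longrightarrow> CPP x x r 1)"
proof
  assume "norm_from_inner_product TYPE('a)"
  then obtain ip :: "'a \<Rightarrow> 'a \<Rightarrow> real" where "norm_from_inner ip"
    unfolding norm_from_inner_product_def norm_from_inner_def by blast
  then show "\<forall>x::'a. \<forall>r>0. norm x = 1 \<longrightarrow> CPP x x r 1"
    using norm_from_inner.CPP_self by blast
next
  assume "\<forall>x::'a. \<forall>r>0. norm x = 1 \<longrightarrow> CPP x x r 1"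
  then have "bj_orth u v \<Longrightarrow> norm (u + v) = norm (u - v)" for u v :: 'a
    by (intro isosceles_if_CPP[of 3]) simp_all
  then show "norm_from_inner_product TYPE('a)"
    by (rule norm_from_inner_product_if_isosceles)
qed

end
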